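(* Let $D$ be an integer which is not a perfect square, let $A,B\in\mathbb{Z}$, and let $p\neq 2$ be a prime with $p\mid D$ and $p^2\nmid D$. Let $l\geq 1$ be an integer such that $p^{l+1}$ divides none of $A$, $B$, $A-B$, $G(A,B)$, where $G(A,B)=A^2-2AB+B^2-2A-2B+1$. Suppose $\mathbf{t}=(t_0,\ldots,t_4)\in(\mathbb{Z}/p^{8l+1}\mathbb{Z})^5$ has components not all divisible by $p$ and satisfies $Q_1(\mathbf{t})\equiv Q_2(\mathbf{t})\equiv 0\pmod{p^{8l+1}}$. Then $p^{4l+1}$ does not divide all $2\times 2$ minors of the Jacobian matrix of $(Q_1,Q_2)$ at $\mathbf{t}$.
   Context: $Q_1(\mathbf{t})=t_2^2-Dt_3^2-t_0t_1$ and $Q_2(\mathbf{t})=t_2^2-Dt_4^2-(t_0+At_1)(t_0+Bt_1)$. The Jacobian matrix at $\mathbf{t}$ is $\begin{pmatrix} t_1 & t_0 & -2t_2 & 2Dt_3 & 0\\ 2t_0+(A+B)t_1 & (A+B)t_0+2ABt_1 & -2t_2 & 0 & 2Dt_4\end{pmatrix}$ (up to sign conventions, the minors are those of the matrix of partial derivatives). *)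

theory Defs
  imports "HOL-Computational_Algebra.Primes"
begin

text \<open>Points t = (t_0,...,t_4) are represented by t :: nat => int, using only t 0, ..., t 4.\<close>

definition Q1 :: "int \<Rightarrow> (nat \<Rightarrow> int) \<Rightarrow> int" where
  "Q1 D t = (t 2)^2 - D * (t 3)^2 - t 0 * t 1"

definition Q2 :: "int \<Rightarrow> int \<Rightarrow> int \<Rightarrow> (nat \<Rightarrow> int) \<Rightarrow> int" where
  "Q2 D A B t = (t 2)^2 - D * (t 4)^2 - (t 0 + A * t 1) * (t 0 + B * t 1)"

definition G :: "int \<Rightarrow> int \<Rightarrow> int" where
  "G A B = A^2 - 2*A*B + B^2 - 2*A - 2*B + 1"

text \<open>Jacobian matrix (row r in {0,1}, column c in {0..4}), as given in the paper
  (the negative of the matrix of partial derivatives; minors agree up to sign).\<close>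
definition jac :: "int \<Rightarrow> int \<Rightarrow> int \<Rightarrow> (nat \<Rightarrow> int) \<Rightarrow> nat \<Rightarrow> nat \<Rightarrow> int" where
  "jac D A B t r c =
    (if r = 0 then
       (if c = 0 then t 1 else if c = 1 then t 0 else if c = 2 then -2 * t 2
        else if c = 3 then 2 * D * t 3 else 0)
     else
       (if c = 0 then 2 * t 0 + (A + B) * t 1
        else if c = 1 then (A + B) * t 0 + 2 * A * B * t 1
        else if c = 2 then -2 * t 2 else if c = 3 then 0 else 2 * D * t 4))"

definition jac_minor :: "int \<Rightarrow> int \<Rightarrow> int \<Rightarrow> (nat \<Rightarrow> int) \<Rightarrow> nat \<Rightarrow> nat \<Rightarrow> int" where
  "jac_minor D A B t i j = jac D A B t 0 i * jac D A B t 1 j - jac D A B t 0 j * jac D A B t 1 i"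

end

theory Submission
  imports Defs
begin

text \<open>Two suitable combinations of the minors with columns 0, 2 and 1, 2 isolate
  \<open>t\<^sub>2 G(A,B) t\<^sub>j\<close>, and those with columns 0, 3 and 1, 3 isolate
  \<open>D t\<^sub>3 (A-B)\<^sup>2 t\<^sub>j\<close> (\<open>j = 0, 1\<close>). The equations modulo \<open>p\<^sup>2\<close>
  force \<open>t\<^sub>0\<close> or \<open>t\<^sub>1\<close> to be a unit, so the valuation bounds on \<open>G(A,B)\<close>, \<open>A-B\<close> and
  \<open>D\<close> give \<open>p\<^bsup>3l+1\<^esup> | t\<^sub>2\<close> and \<open>p\<^bsup>2l\<^esup> | t\<^sub>3\<close>. Then \<open>Q\<^sub>1\<close> yields \<open>p\<^bsup>4l+1\<^esup> | t\<^sub>0 t\<^sub>1\<close>.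
  If \<open>t\<^sub>0\<close> is the unit, \<open>p | t\<^sub>1\<close> and \<open>Q\<^sub>2\<close> modulo \<open>p\<close> gives \<open>p | t\<^sub>0\<close>; if \<open>t\<^sub>1\<close> is the
  unit, the minor with columns 0, 1 gives \<open>p\<^bsup>4l+1\<^esup> | AB\<close>, contradicting the bounds on
  \<open>A\<close> and \<open>B\<close>.\<close>

lemma prime_power_dvd_mult_cancel_right:
  fixes p x y :: "'a :: factorial_semiring"
  assumes "prime p" "p ^ n dvd x * y" "\<not> p ^ (b + 1) dvd y" "a + b \<le> n"
  shows "p ^ a dvd x"
proof (cases "x = 0")
  case False
  have "y \<noteq> 0" using assms(3) by auto
  have unit: "\<not> is_unit p" using assms(1) by (simp add: prime_elem_not_unit)
  have "a + b \<le> multiplicity p (x * y)"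
    using power_le_dvd[OF assms(2,4)] power_dvd_iff_le_multiplicity[OF _ unit] \<open>x \<noteq> 0\<close> \<open>y \<noteq> 0\<close>
    by simp
  also have "\<dots> = multiplicity p x + multiplicity p y"
    using prime_elem_multiplicity_mult_distrib assms(1) \<open>x \<noteq> 0\<close> \<open>y \<noteq> 0\<close> by auto
  finally have "a + b \<le> multiplicity p x + multiplicity p y" .
  moreover have "multiplicity p y \<le> b"
    using assms(3) power_dvd_iff_le_multiplicity[OF \<open>y \<noteq> 0\<close> unit, of "b + 1"] by linarith
  ultimately show ?thesis
    using power_dvd_iff_le_multiplicity[OF \<open>x \<noteq> 0\<close> unit] by simp
qed simp

lemma prime_power_dvd_mult_coprime_right:
  fixes p x y :: "'a :: factorial_semiring"
  assumes "prime p" "p ^ n dvd x * y" "\<not> p dvd y"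
  shows "p ^ n dvd x"
  using prime_power_dvd_mult_cancel_right[of p n x y 0 n] assms by simp

lemma prime_dvd_of_sq_dvd_sq_mult:
  fixes p x d :: "'a :: factorial_semiring"
  assumes "prime p" "\<not> p ^ 2 dvd d" "p ^ 2 dvd x ^ 2 * d"
  shows "p dvd x"
proof -
  have "p ^ 1 dvd x ^ 2"
    using prime_power_dvd_mult_cancel_right[of p 2 "x ^ 2" d 1 1] assms by (simp add: numeral_2_eq_2)
  thus ?thesis using assms(1) prime_dvd_power by auto
qed

lemma Q1_Q2_unit_t0_or_t1:
  fixes D A B p :: int and t :: "nat \<Rightarrow> int"
  assumes "prime p" "p dvd D" "\<not> p ^ 2 dvd D"
    and "\<exists>i<5. \<not> p dvd t i"
    and "p ^ 2 dvd Q1 D t" "p ^ 2 dvd Q2 D A B t"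
  shows "\<not> p dvd t 0 \<or> \<not> p dvd t 1"
proof (rule ccontr)
  assume "\<not> ?thesis"
  hence "p dvd t 0" "p dvd t 1" by auto
  hence sq01: "p ^ 2 dvd t 0 * t 1" "p ^ 2 dvd (t 0 + A * t 1) * (t 0 + B * t 1)"
    by (simp_all add: power2_eq_square mult_dvd_mono)
  have "p dvd t 2 ^ 2"
  proof -
    have "t 2 ^ 2 = Q1 D t + D * t 3 ^ 2 + t 0 * t 1" by (simp add: Q1_def)
    moreover have "p dvd Q1 D t" using assms(5) by (rule dvd_trans[rotated]) simp
    ultimately show ?thesis using assms(2) \<open>p dvd t 0\<close> by simp
  qed
  hence "p dvd t 2" using assms(1) prime_dvd_power by blast
  hence sq2: "p ^ 2 dvd t 2 ^ 2" by (rule dvd_power_same)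
  have "t 3 ^ 2 * D = t 2 ^ 2 - t 0 * t 1 - Q1 D t" by (simp add: Q1_def)
  hence "p dvd t 3"
    using prime_dvd_of_sq_dvd_sq_mult[OF assms(1,3)] sq01(1) sq2 assms(5) by (simp add: dvd_diff)
  have "t 4 ^ 2 * D = t 2 ^ 2 - (t 0 + A * t 1) * (t 0 + B * t 1) - Q2 D A B t"
    by (simp add: Q2_def)
  hence "p dvd t 4"
    using prime_dvd_of_sq_dvd_sq_mult[OF assms(1,3)] sq01(2) sq2 assms(6) by (simp add: dvd_diff)
  then show False
    using assms(4) \<open>p dvd t 0\<close> \<open>p dvd t 1\<close> \<open>p dvd t 2\<close> \<open>p dvd t 3\<close>
    by (auto simp: less_Suc_eq numeral_eq_Suc)
qed

lemma jac_minor_0_1: "jac_minor D A B t 0 1 = 2 * A * B * t 1 ^ 2 - 2 * t 0 ^ 2"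
  by (simp add: jac_minor_def jac_def power2_eq_square algebra_simps)

lemma dvd_t2_G_of_dvd_jac_minors:
  fixes m D A B :: int and t :: "nat \<Rightarrow> int"
  assumes "m dvd jac_minor D A B t 0 2" "m dvd jac_minor D A B t 1 2"
  shows "m dvd t 2 * G A B * (2 * t 0)" "m dvd t 2 * G A B * (2 * t 1)"
proof -
  define c where "c = A + B - 1"
  have m02: "jac_minor D A B t 0 2 = 2 * t 2 * (2 * t 0 + c * t 1)"
   and m12: "jac_minor D A B t 1 2 = 2 * t 2 * (c * t 0 + 2 * A * B * t 1)"
    by (simp_all add: jac_minor_def jac_def c_def algebra_simps)
  have G: "G A B = c ^ 2 - 4 * A * B" by (simp add: G_def c_def power2_eq_square algebra_simps)
  have "t 2 * G A B * (2 * t 0) = c * jac_minor D A B t 1 2 - 2 * A * B * jac_minor D A B t 0 2"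
   and "t 2 * G A B * (2 * t 1) = c * jac_minor D A B t 0 2 - 2 * jac_minor D A B t 1 2"
    unfolding m02 m12 G power2_eq_square by algebra+
  then show "m dvd t 2 * G A B * (2 * t 0)" "m dvd t 2 * G A B * (2 * t 1)"
    using assms by simp_all
qed

lemma dvd_t3_sq_diff_of_dvd_jac_minors:
  fixes m D A B :: int and t :: "nat \<Rightarrow> int"
  assumes "m dvd jac_minor D A B t 0 3" "m dvd jac_minor D A B t 1 3"
  shows "m dvd t 3 * (A - B) ^ 2 * (2 * t 0) * D" "m dvd t 3 * (A - B) ^ 2 * (2 * t 1) * D"
proof -
  have m03: "jac_minor D A B t 0 3 = - (2 * D * t 3 * (2 * t 0 + (A + B) * t 1))"
   and m13: "jac_minor D A B t 1 3 = - (2 * D * t 3 * ((A + B) * t 0 + 2 * A * B * t 1))"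
    by (simp_all add: jac_minor_def jac_def algebra_simps)
  have "t 3 * (A - B) ^ 2 * (2 * t 0) * D
          = 2 * A * B * jac_minor D A B t 0 3 - (A + B) * jac_minor D A B t 1 3"
   and "t 3 * (A - B) ^ 2 * (2 * t 1) * D
          = 2 * jac_minor D A B t 1 3 - (A + B) * jac_minor D A B t 0 3"
    unfolding m03 m13 power2_eq_square by algebra+
  then show "m dvd t 3 * (A - B) ^ 2 * (2 * t 0) * D" "m dvd t 3 * (A - B) ^ 2 * (2 * t 1) * D"
    using assms by simp_all
qed

lemma power_dvd_t2_t3_of_dvd_jac_minors:
  fixes D A B p :: int and l :: nat and t :: "nat \<Rightarrow> int"
  assumes "prime p" "\<not> p dvd 2" "\<not> p ^ 2 dvd D"
    and "\<not> p ^ (l + 1) dvd A - B" "\<not> p ^ (l + 1) dvd G A B"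
    and "\<not> p dvd t 0 \<or> \<not> p dvd t 1"
    and "p ^ (4 * l + 1) dvd jac_minor D A B t 0 2" "p ^ (4 * l + 1) dvd jac_minor D A B t 1 2"
    and "p ^ (4 * l + 1) dvd jac_minor D A B t 0 3" "p ^ (4 * l + 1) dvd jac_minor D A B t 1 3"
  shows "p ^ (3 * l + 1) dvd t 2" "p ^ (2 * l) dvd t 3"
proof -
  obtain j where j: "j = 0 \<or> j = 1" and "\<not> p dvd t j" using assms(6) by blast
  hence unit: "\<not> p dvd 2 * t j" using assms(1,2) by (simp add: prime_dvd_mult_iff)
  have "p ^ (4 * l + 1) dvd t 2 * G A B * (2 * t j)"
    using dvd_t2_G_of_dvd_jac_minors[OF assms(7,8)] j by auto
  hence "p ^ (4 * l + 1) dvd t 2 * G A B"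
    using prime_power_dvd_mult_coprime_right[OF assms(1) _ unit] by blast
  then show "p ^ (3 * l + 1) dvd t 2"
    by (rule prime_power_dvd_mult_cancel_right[OF assms(1) _ assms(5)]) simp
  have "p ^ (4 * l + 1) dvd t 3 * (A - B) ^ 2 * (2 * t j) * D"
    using dvd_t3_sq_diff_of_dvd_jac_minors[OF assms(9,10)] j by auto
  moreover have "\<not> p ^ (1 + 1) dvd D" using assms(3) by (simp add: numeral_2_eq_2)
  ultimately have "p ^ (4 * l) dvd t 3 * (A - B) ^ 2 * (2 * t j)"
    by (rule prime_power_dvd_mult_cancel_right[OF assms(1)]) simp
  hence "p ^ (4 * l) dvd t 3 * (A - B) ^ 2"
    by (rule prime_power_dvd_mult_coprime_right[OF assms(1) _ unit])
  hence "p ^ (4 * l) dvd (t 3 * (A - B)) * (A - B)" by (simp add: power2_eq_square mult.assoc)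
  hence "p ^ (3 * l) dvd t 3 * (A - B)"
    by (rule prime_power_dvd_mult_cancel_right[OF assms(1) _ assms(4)]) simp
  then show "p ^ (2 * l) dvd t 3"
    by (rule prime_power_dvd_mult_cancel_right[OF assms(1) _ assms(4)]) simp
qed

lemma power_dvd_t0_mult_t1:
  fixes D p :: int and l :: nat and t :: "nat \<Rightarrow> int"
  assumes "p dvd D" "p ^ (3 * l + 1) dvd t 2" "p ^ (2 * l) dvd t 3"
    and "p ^ (4 * l + 1) dvd Q1 D t"
  shows "p ^ (4 * l + 1) dvd t 0 * t 1"
proof -
  have "p ^ ((3 * l + 1) * 2) dvd t 2 ^ 2"
    using dvd_power_same[OF assms(2), of 2] by (simp only: power_mult)
  hence t2: "p ^ (4 * l + 1) dvd t 2 ^ 2" by (rule power_le_dvd) simp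
  have "p ^ ((2 * l) * 2) dvd t 3 ^ 2"
    using dvd_power_same[OF assms(3), of 2] by (simp only: power_mult)
  hence "p ^ (2 * l * 2) * p dvd t 3 ^ 2 * D" using assms(1) by (rule mult_dvd_mono)
  moreover have "p ^ (4 * l + 1) = p ^ (2 * l * 2) * p" by (simp add: power_add mult.commute)
  ultimately have t3: "p ^ (4 * l + 1) dvd D * t 3 ^ 2" by (simp only: mult.commute)
  have "t 0 * t 1 = t 2 ^ 2 - D * t 3 ^ 2 - Q1 D t" by (simp add: Q1_def)
  then show ?thesis using t2 t3 assms(4) by (simp add: dvd_diff)
qed

lemma prime_dvd_t0_of_dvd_Q2:
  fixes D A B p :: int and t :: "nat \<Rightarrow> int"
  assumes "prime p" "p dvd D" "p dvd t 1" "p dvd t 2" "p dvd Q2 D A B t"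
  shows "p dvd t 0"
proof -
  have "t 0 ^ 2 = t 2 ^ 2 - D * t 4 ^ 2 - Q2 D A B t - t 1 * ((A + B) * t 0 + A * B * t 1)"
    by (simp add: Q2_def algebra_simps power2_eq_square)
  moreover have "p dvd t 2 ^ 2 - D * t 4 ^ 2 - Q2 D A B t - t 1 * ((A + B) * t 0 + A * B * t 1)"
    using assms(2-5) by (simp add: power2_eq_square)
  ultimately have "p dvd t 0 ^ 2" by simp
  then show ?thesis using assms(1) prime_dvd_power by blast
qed

lemma power_dvd_mult_of_dvd_jac_minor_0_1:
  fixes D A B p :: int and n :: nat and t :: "nat \<Rightarrow> int"
  assumes "prime p" "\<not> p dvd 2" "\<not> p dvd t 1" "p ^ n dvd t 0"
    and "p ^ n dvd jac_minor D A B t 0 1"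
  shows "p ^ n dvd A * B"
proof -
  have "A * B * (2 * t 1 ^ 2) = jac_minor D A B t 0 1 + t 0 * (2 * t 0)"
    unfolding jac_minor_0_1 by (simp add: algebra_simps power2_eq_square)
  hence "p ^ n dvd A * B * (2 * t 1 ^ 2)" using assms(4,5) by simp
  moreover have "\<not> p dvd 2 * t 1 ^ 2"
    using assms(1-3) by (simp add: prime_dvd_mult_iff prime_dvd_power_iff)
  ultimately show ?thesis using prime_power_dvd_mult_coprime_right[OF assms(1)] by blast
qed

lemma not_power_dvd_t0_mult_t1:
  fixes D A B p :: int and l :: nat and t :: "nat \<Rightarrow> int"
  assumes "prime p" "\<not> p dvd 2" "p dvd D"
    and "\<not> p ^ (l + 1) dvd A" "\<not> p ^ (l + 1) dvd B"
    and "\<not> p dvd t 0 \<or> \<not> p dvd t 1" "p dvd t 2" "p dvd Q2 D A B t"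
    and "p ^ (4 * l + 1) dvd jac_minor D A B t 0 1"
  shows "\<not> p ^ (4 * l + 1) dvd t 0 * t 1"
proof
  assume t01: "p ^ (4 * l + 1) dvd t 0 * t 1"
  show False
  proof (cases "p dvd t 0")
    case False
    have "p ^ (4 * l + 1) dvd t 1 * t 0" using t01 by (simp add: mult.commute)
    hence "p ^ (4 * l + 1) dvd t 1" by (rule prime_power_dvd_mult_coprime_right[OF assms(1) _ False])
    hence "p dvd t 1" by (rule dvd_trans[rotated]) simp
    with False show False using prime_dvd_t0_of_dvd_Q2[OF assms(1,3) _ assms(7,8)] by blast
  next
    case True
    hence "\<not> p dvd t 1" using assms(6) by blast
    hence "p ^ (4 * l + 1) dvd t 0" using prime_power_dvd_mult_coprime_right[OF assms(1)] t01 by blast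
    hence "p ^ (4 * l + 1) dvd A * B"
      using power_dvd_mult_of_dvd_jac_minor_0_1 assms(1,2,9) \<open>\<not> p dvd t 1\<close> by blast
    hence "p ^ (3 * l + 1) dvd A"
      by (rule prime_power_dvd_mult_cancel_right[OF assms(1) _ assms(5)]) simp
    with assms(4) show False using power_le_dvd[of p "3 * l + 1" A "l + 1"] by simp
  qed
qed

theorem lemma2p2:
  fixes D A B p :: int and l :: nat and t :: "nat \<Rightarrow> int"
  assumes "\<not> (\<exists>k::int. D = k^2)"
    and "prime p" and "p \<noteq> 2" and "p dvd D" and "\<not> p^2 dvd D"
    and "l \<ge> 1"
    and "\<not> p^(l+1) dvd A" and "\<not> p^(l+1) dvd B" and "\<not> p^(l+1) dvd (A - B)"
    and "\<not> p^(l+1) dvd G A B"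
    and "\<exists>i<5. \<not> p dvd t i"
    and "p^(8*l+1) dvd Q1 D t" and "p^(8*l+1) dvd Q2 D A B t"
  shows "\<not> (\<forall>i j. i < j \<and> j < 5 \<longrightarrow> p^(4*l+1) dvd jac_minor D A B t i j)"
proof
  assume minors: "\<forall>i j. i < j \<and> j < 5 \<longrightarrow> p^(4*l+1) dvd jac_minor D A B t i j"
  have odd: "\<not> p dvd 2"
    using primes_dvd_imp_eq[OF assms(2), of 2] assms(3) by auto
  have "2 \<le> 8 * l + 1" "4 * l + 1 \<le> 8 * l + 1" using assms(6) by simp_all
  then have Q: "p ^ 2 dvd Q1 D t" "p ^ 2 dvd Q2 D A B t" "p ^ (4 * l + 1) dvd Q1 D t"
    using power_le_dvd[OF assms(12)] power_le_dvd[OF assms(13)] by blast+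
  have unit: "\<not> p dvd t 0 \<or> \<not> p dvd t 1"
    using Q1_Q2_unit_t0_or_t1[OF assms(2,4,5,11) Q(1,2)] .
  have t2: "p ^ (3 * l + 1) dvd t 2" and t3: "p ^ (2 * l) dvd t 3"
    using power_dvd_t2_t3_of_dvd_jac_minors[OF assms(2) odd assms(5,9,10) unit]
      minors[rule_format, of 0 2] minors[rule_format, of 1 2]
      minors[rule_format, of 0 3] minors[rule_format, of 1 3] by simp_all
  have "p dvd t 2" using t2 by (rule dvd_trans[rotated]) simp
  moreover have "p dvd Q2 D A B t" using Q(2) by (rule dvd_trans[rotated]) simp
  moreover have "p ^ (4 * l + 1) dvd jac_minor D A B t 0 1" using minors by simp
  ultimately have "\<not> p ^ (4 * l + 1) dvd t 0 * t 1"
    using not_power_dvd_t0_mult_t1[OF assms(2) odd assms(4,7,8) unit] by blast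
  then show False using power_dvd_t0_mult_t1[OF assms(4) t2 t3 Q(3)] by contradiction
qed

end
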